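(* Let $\rho>0$ and $\kappa_0=1/\rho$. Consider the differential equation for a function $\tau(s)$ $$\frac{\rho^4\tau'^2}{9-4\rho^2\tau^2}=\rho^2\kappa_0^2-\frac12+\frac{\rho^2\tau^2}{9}\mp\frac16\sqrt{9-4\rho^2\tau^2}.$$ This equation (for one of the two sign choices) admits the explicit exact solution $$\tau(s)=\pm\frac{6\sqrt2}{\rho}\,\frac{\sqrt{Y(s)}\,|Y(s)-1|}{Y(s)^2+6Y(s)+1},\qquad Y(s)=C e^{\pm\frac{2\sqrt2}{\rho}s},$$ where $C>0$ is a constant of integration depending on the initial conditions.
   Context: This differential equation is the condition satisfied by the torsion $\tau(s)$ (as a function of arc length $s$, primes denoting $d/ds$) of a curve with constant curvature $\kappa_0$ lying on a circular cylinder of radius $\rho$. *)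

theory Defs
  imports Complex_Main
begin

definition Yfun :: "real \<Rightarrow> real \<Rightarrow> real \<Rightarrow> real \<Rightarrow> real" where
  "Yfun \<rho> C \<eta> s = C * exp (\<eta> * (2 * sqrt 2 / \<rho>) * s)"

definition tau_sol :: "real \<Rightarrow> real \<Rightarrow> real \<Rightarrow> real \<Rightarrow> real \<Rightarrow> real" where
  "tau_sol \<rho> C \<epsilon> \<eta> s =
     \<epsilon> * (6 * sqrt 2 / \<rho>) *
       (sqrt (Yfun \<rho> C \<eta> s) * \<bar>Yfun \<rho> C \<eta> s - 1\<bar> /
        ((Yfun \<rho> C \<eta> s)\<^sup>2 + 6 * Yfun \<rho> C \<eta> s + 1))"

end

theory Submission
  imports Defs
begin

text \<open>
  Put \<open>z = sqrt Y\<close>. Then \<open>z' = \<eta> (sqrt 2 / \<rho>) z\<close> and \<open>\<tau> = \<epsilon> (6 sqrt 2 / \<rho>) \<bar>F z\<bar>\<close> with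
  \<open>F z = z (z\<^sup>2 - 1) / E\<close>, \<open>E = z^4 + 6 z\<^sup>2 + 1\<close>. The key observation is that
  \<open>9 - 4 \<rho>\<^sup>2 \<tau>\<^sup>2 = (3 q / E)\<^sup>2\<close> with \<open>q = z^4 - 10 z\<^sup>2 + 1\<close>, and also
  \<open>F' z = - (z\<^sup>2 + 1) q / E\<^sup>2\<close>. So the square root in the equation is rational in \<open>z\<close>, the sign \<open>\<sigma>\<close>
  is the sign of \<open>q\<close>, and the equation reduces to the polynomial identity
  \<open>E\<^sup>2 + 16 z\<^sup>2 (z\<^sup>2 - 1)\<^sup>2 - q E = 32 z\<^sup>2 (z\<^sup>2 + 1)\<^sup>2\<close>.
\<close>

definition torsion_profile :: "real \<Rightarrow> real" where
  "torsion_profile z = z * (z\<^sup>2 - 1) / (z^4 + 6 * z\<^sup>2 + 1)"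

lemma quartic_denominator_pos: "z^4 + 6 * z\<^sup>2 + 1 > (0::real)"
proof -
  have "0 \<le> z^4" "0 \<le> z\<^sup>2" by simp_all
  then show ?thesis by linarith
qed

lemma has_real_derivative_abs:
  fixes f :: "real \<Rightarrow> real"
  assumes f: "(f has_real_derivative D) (at x)" and nz: "f x \<noteq> 0"
  shows "((\<lambda>t. \<bar>f t\<bar>) has_real_derivative sgn (f x) * D) (at x)"
proof -
  have lim: "(f \<longlongrightarrow> f x) (at x)"
    using DERIV_isCont[OF f] by (simp add: isCont_def)
  have "\<forall>\<^sub>F t in at x. \<bar>f t\<bar> = sgn (f x) * f t"
  proof (cases "f x > 0")
    case True
    with order_tendstoD(1)[OF lim, of 0] show ?thesis
      by (auto elim: eventually_mono)
  next
    case False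
    with nz have "f x < 0" by simp
    with order_tendstoD(2)[OF lim, of 0] show ?thesis
      by (auto elim: eventually_mono)
  qed
  then have "((\<lambda>t. \<bar>f t\<bar>) has_real_derivative sgn (f x) * D) (at x) \<longleftrightarrow>
             ((\<lambda>t. sgn (f x) * f t) has_real_derivative sgn (f x) * D) (at x)"
    by (rule has_field_derivative_cong_eventually) (simp add: abs_sgn mult.commute)
  then show ?thesis
    using f by (simp add: DERIV_cmult)
qed

lemma torsion_profile_has_real_derivative:
  "(torsion_profile has_real_derivative
     - ((z\<^sup>2 + 1) * (z^4 - 10 * z\<^sup>2 + 1) / (z^4 + 6 * z\<^sup>2 + 1)\<^sup>2)) (at z)"
proof -
  define E where "E = z^4 + 6 * z\<^sup>2 + 1"
  have "E \<noteq> 0" using quartic_denominator_pos[of z] by (simp add: E_def)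
  have "(torsion_profile has_real_derivative
          ((3 * z\<^sup>2 - 1) * E - z * (z\<^sup>2 - 1) * (4 * z^3 + 12 * z)) / E\<^sup>2) (at z)"
    unfolding torsion_profile_def[abs_def] E_def
    using quartic_denominator_pos[of z]
    by (auto intro!: derivative_eq_intros simp: power2_eq_square field_simps)
  also have "(3 * z\<^sup>2 - 1) * E - z * (z\<^sup>2 - 1) * (4 * z^3 + 12 * z)
               = - ((z\<^sup>2 + 1) * (z^4 - 10 * z\<^sup>2 + 1))"
    unfolding E_def by algebra
  finally show ?thesis
    by (simp only: E_def minus_divide_left)
qed

lemma discriminant_torsion_profile:
  "9 - 288 * (torsion_profile z)\<^sup>2 = (3 * (z^4 - 10 * z\<^sup>2 + 1) / (z^4 + 6 * z\<^sup>2 + 1))\<^sup>2"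
proof -
  define E where "E = z^4 + 6 * z\<^sup>2 + 1"
  have "E \<noteq> 0" using quartic_denominator_pos[of z] by (simp add: E_def)
  have "torsion_profile z = z * (z\<^sup>2 - 1) / E"
    by (simp add: torsion_profile_def E_def)
  then have "9 - 288 * (torsion_profile z)\<^sup>2 = (9 * E\<^sup>2 - 288 * (z * (z\<^sup>2 - 1))\<^sup>2) / E\<^sup>2"
    using \<open>E \<noteq> 0\<close> by (simp only:) (simp add: power_divide field_simps)
  also have "9 * E\<^sup>2 - 288 * (z * (z\<^sup>2 - 1))\<^sup>2 = (3 * (z^4 - 10 * z\<^sup>2 + 1))\<^sup>2"
    unfolding E_def by algebra
  finally show ?thesis
    by (simp add: power_divide E_def)
qed

lemma sqrt_Yfun:
  assumes "C > 0"
  shows "sqrt (Yfun \<rho> C \<eta> s) = sqrt C * exp (\<eta> * sqrt 2 / \<rho> * s)"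
proof -
  have "exp (\<eta> * (2 * sqrt 2 / \<rho>) * s) = (exp (\<eta> * sqrt 2 / \<rho> * s))\<^sup>2"
    by (simp add: power2_eq_square flip: exp_add)
  then show ?thesis
    using assms by (simp add: Yfun_def real_sqrt_mult)
qed

lemma sqrt_Yfun_has_real_derivative:
  assumes "C > 0"
  shows "((\<lambda>s. sqrt (Yfun \<rho> C \<eta> s)) has_real_derivative \<eta> * sqrt 2 / \<rho> * sqrt (Yfun \<rho> C \<eta> s)) (at s)"
proof -
  have "((\<lambda>s. sqrt C * exp (b * s)) has_real_derivative b * (sqrt C * exp (b * s))) (at s)" for b
    by (auto intro!: derivative_eq_intros)
  then show ?thesis
    unfolding sqrt_Yfun[OF assms] .
qed

lemma tau_sol_eq_abs_torsion_profile:
  assumes "C > 0"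
  shows "tau_sol \<rho> C \<epsilon> \<eta> s = \<epsilon> * (6 * sqrt 2 / \<rho>) * \<bar>torsion_profile (sqrt (Yfun \<rho> C \<eta> s))\<bar>"
proof -
  obtain z where "z > 0" and Y: "Yfun \<rho> C \<eta> s = z\<^sup>2"
    using assms by (intro that[of "sqrt (Yfun \<rho> C \<eta> s)"]) (simp_all add: Yfun_def)
  have "sqrt (z\<^sup>2) * \<bar>z\<^sup>2 - 1\<bar> / ((z\<^sup>2)\<^sup>2 + 6 * z\<^sup>2 + 1) = \<bar>torsion_profile (sqrt (z\<^sup>2))\<bar>"
    using \<open>z > 0\<close> quartic_denominator_pos[of z] by (simp add: torsion_profile_def abs_mult)
  then show ?thesis
    by (simp only: tau_sol_def Y)
qed

lemma tau_sol_square: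
  assumes "\<rho> \<noteq> 0" and "C > 0" and "\<epsilon> \<in> {-1, 1}"
  shows "\<rho>\<^sup>2 * (tau_sol \<rho> C \<epsilon> \<eta> s)\<^sup>2 = 72 * (torsion_profile (sqrt (Yfun \<rho> C \<eta> s)))\<^sup>2"
  using assms by (auto simp: tau_sol_eq_abs_torsion_profile power_mult_distrib power_divide)

lemma tau_sol_has_real_derivative:
  fixes \<rho> C \<epsilon> \<eta> s :: real
  defines "z \<equiv> sqrt (Yfun \<rho> C \<eta> s)"
  assumes "\<rho> > 0" and "C > 0" and \<epsilon>: "\<epsilon> \<in> {-1, 1}" and \<eta>: "\<eta> \<in> {-1, 1}"
    and Y_ne_1: "Yfun \<rho> C \<eta> s \<noteq> 1"
    and D: "(torsion_profile has_real_derivative D) (at z)"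
  obtains \<tau>' where "(tau_sol \<rho> C \<epsilon> \<eta> has_real_derivative \<tau>') (at s)"
    and "\<rho>^4 * \<tau>'\<^sup>2 = 144 * z\<^sup>2 * D\<^sup>2"
proof
  define F where "F = torsion_profile z"
  have "Yfun \<rho> C \<eta> s > 0"
    using \<open>C > 0\<close> by (simp add: Yfun_def)
  then have "z > 0" and "z\<^sup>2 \<noteq> 1"
    using Y_ne_1 by (simp_all add: z_def)
  then have "F \<noteq> 0"
    using quartic_denominator_pos[of z] by (simp add: F_def torsion_profile_def)
  have "((\<lambda>t. torsion_profile (sqrt (Yfun \<rho> C \<eta> t))) has_real_derivative D * (\<eta> * sqrt 2 / \<rho> * z)) (at s)"
    using DERIV_chain2[OF D[unfolded z_def] sqrt_Yfun_has_real_derivative[OF \<open>C > 0\<close>]] by (simp add: z_def)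
  then have "((\<lambda>t. \<bar>torsion_profile (sqrt (Yfun \<rho> C \<eta> t))\<bar>) has_real_derivative
               sgn F * (D * (\<eta> * sqrt 2 / \<rho> * z))) (at s)"
    unfolding F_def z_def by (rule has_real_derivative_abs) (use \<open>F \<noteq> 0\<close> in \<open>simp add: F_def z_def\<close>)
  then show "(tau_sol \<rho> C \<epsilon> \<eta> has_real_derivative
               \<epsilon> * (6 * sqrt 2 / \<rho>) * (sgn F * (D * (\<eta> * sqrt 2 / \<rho> * z)))) (at s)"
    unfolding tau_sol_eq_abs_torsion_profile[OF \<open>C > 0\<close>, abs_def] by (rule DERIV_cmult)
  have "\<epsilon>\<^sup>2 = 1" "\<eta>\<^sup>2 = 1" "(sgn F)\<^sup>2 = 1"
    using \<epsilon> \<eta> \<open>F \<noteq> 0\<close> by (auto simp: sgn_if)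
  then show "\<rho>^4 * (\<epsilon> * (6 * sqrt 2 / \<rho>) * (sgn F * (D * (\<eta> * sqrt 2 / \<rho> * z))))\<^sup>2 = 144 * z\<^sup>2 * D\<^sup>2"
    using \<open>\<rho> > 0\<close> by (simp add: power_mult_distrib power_divide field_simps)
qed

lemma torsion_equation_of_profile:
  fixes \<rho> T T' z :: real
  defines "E \<equiv> z^4 + 6 * z\<^sup>2 + 1" and "q \<equiv> z^4 - 10 * z\<^sup>2 + 1"
  assumes "\<rho> > 0"
    and T: "\<rho>\<^sup>2 * T\<^sup>2 = 72 * (torsion_profile z)\<^sup>2"
    and D: "(torsion_profile has_real_derivative D) (at z)"
    and T': "\<rho>^4 * T'\<^sup>2 = 144 * z\<^sup>2 * D\<^sup>2"
    and disc_nz: "9 - 4 * \<rho>\<^sup>2 * T\<^sup>2 \<noteq> 0"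
  shows "\<exists>\<sigma>\<in>{-1, 1::real}.
           \<rho>^4 * T'\<^sup>2 / (9 - 4 * \<rho>\<^sup>2 * T\<^sup>2)
           = \<rho>\<^sup>2 * (1 / \<rho>)\<^sup>2 - 1/2 + \<rho>\<^sup>2 * T\<^sup>2 / 9 - \<sigma> * (1/6) * sqrt (9 - 4 * \<rho>\<^sup>2 * T\<^sup>2)"
proof
  have "E > 0" using quartic_denominator_pos[of z] by (simp add: E_def)
  have F: "torsion_profile z = z * (z\<^sup>2 - 1) / E"
    by (simp add: torsion_profile_def E_def)
  have "D = - ((z\<^sup>2 + 1) * q / E\<^sup>2)"
    using DERIV_unique[OF D torsion_profile_has_real_derivative] by (simp add: E_def q_def)
  then have T'_explicit: "\<rho>^4 * T'\<^sup>2 = 144 * z\<^sup>2 * ((z\<^sup>2 + 1) * q / E\<^sup>2)\<^sup>2"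
    by (simp only: T' power2_minus)
  have disc: "9 - 4 * \<rho>\<^sup>2 * T\<^sup>2 = (3 * q / E)\<^sup>2"
    using discriminant_torsion_profile[of z] T by (simp add: E_def q_def)
  with disc_nz have "q \<noteq> 0" by auto
  then show "sgn q \<in> {-1, 1}" by (auto simp: sgn_if)
  have "\<rho>^4 * T'\<^sup>2 / (9 - 4 * \<rho>\<^sup>2 * T\<^sup>2) = 16 * z\<^sup>2 * (z\<^sup>2 + 1)\<^sup>2 / E\<^sup>2"
    unfolding T'_explicit disc using \<open>q \<noteq> 0\<close> \<open>E > 0\<close>
    by (simp add: power_divide field_simps) (simp add: power2_eq_square algebra_simps)
  also have "\<dots> = (E\<^sup>2 + 16 * (z * (z\<^sup>2 - 1))\<^sup>2 - q * E) / (2 * E\<^sup>2)"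
  proof -
    have "E\<^sup>2 + 16 * (z * (z\<^sup>2 - 1))\<^sup>2 - q * E = 32 * z\<^sup>2 * (z\<^sup>2 + 1)\<^sup>2"
      unfolding E_def q_def by algebra
    then show ?thesis using \<open>E > 0\<close> by simp
  qed
  also have "\<dots> = \<rho>\<^sup>2 * (1 / \<rho>)\<^sup>2 - 1/2 + \<rho>\<^sup>2 * T\<^sup>2 / 9 - sgn q * (1/6) * sqrt (9 - 4 * \<rho>\<^sup>2 * T\<^sup>2)"
  proof -
    have "sqrt (9 - 4 * \<rho>\<^sup>2 * T\<^sup>2) = 3 * \<bar>q\<bar> / E"
      unfolding disc using \<open>E > 0\<close> by simp
    then have sgn_root: "sgn q * (1/6) * sqrt (9 - 4 * \<rho>\<^sup>2 * T\<^sup>2) = q / (2 * E)"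
      using \<open>E > 0\<close> by (simp add: abs_mult_sgn)
    show ?thesis
      unfolding sgn_root T F using \<open>\<rho> > 0\<close> \<open>E > 0\<close>
      by (simp add: power_divide field_simps) (simp add: power2_eq_square power4_eq_xxxx)
  qed
  finally show "\<rho>^4 * T'\<^sup>2 / (9 - 4 * \<rho>\<^sup>2 * T\<^sup>2)
      = \<rho>\<^sup>2 * (1 / \<rho>)\<^sup>2 - 1/2 + \<rho>\<^sup>2 * T\<^sup>2 / 9 - sgn q * (1/6) * sqrt (9 - 4 * \<rho>\<^sup>2 * T\<^sup>2)" .
qed

theorem corollary3p4:
  fixes \<rho> C \<epsilon> \<eta> :: real
  assumes "\<rho> > 0" and "C > 0" and "\<epsilon> \<in> {-1, 1}" and "\<eta> \<in> {-1, 1}"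
  defines "\<kappa>\<^sub>0 \<equiv> 1 / \<rho>"
    and "\<tau> \<equiv> tau_sol \<rho> C \<epsilon> \<eta>"
  shows "\<forall>s. Yfun \<rho> C \<eta> s \<noteq> 1 \<and> 9 - 4 * \<rho>\<^sup>2 * (\<tau> s)\<^sup>2 \<noteq> 0 \<longrightarrow>
           (\<exists>\<tau>'. (\<tau> has_real_derivative \<tau>') (at s) \<and>
              (\<exists>\<sigma>\<in>{-1, 1::real}.
                 \<rho>^4 * \<tau>'\<^sup>2 / (9 - 4 * \<rho>\<^sup>2 * (\<tau> s)\<^sup>2)
                 = \<rho>\<^sup>2 * \<kappa>\<^sub>0\<^sup>2 - 1/2 + \<rho>\<^sup>2 * (\<tau> s)\<^sup>2 / 9
                   - \<sigma> * (1/6) * sqrt (9 - 4 * \<rho>\<^sup>2 * (\<tau> s)\<^sup>2)))"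
proof (intro allI impI)
  fix s
  assume "Yfun \<rho> C \<eta> s \<noteq> 1 \<and> 9 - 4 * \<rho>\<^sup>2 * (\<tau> s)\<^sup>2 \<noteq> 0"
  then have Y_ne_1: "Yfun \<rho> C \<eta> s \<noteq> 1" and disc_nz: "9 - 4 * \<rho>\<^sup>2 * (\<tau> s)\<^sup>2 \<noteq> 0"
    by simp_all
  obtain D where D: "(torsion_profile has_real_derivative D) (at (sqrt (Yfun \<rho> C \<eta> s)))"
    using torsion_profile_has_real_derivative by blast
  obtain \<tau>' where "(\<tau> has_real_derivative \<tau>') (at s)"
    and "\<rho>^4 * \<tau>'\<^sup>2 = 144 * (sqrt (Yfun \<rho> C \<eta> s))\<^sup>2 * D\<^sup>2"
    using tau_sol_has_real_derivative[OF assms(1-4) Y_ne_1 D]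
    unfolding \<tau>_def by blast
  moreover have "\<rho>\<^sup>2 * (\<tau> s)\<^sup>2 = 72 * (torsion_profile (sqrt (Yfun \<rho> C \<eta> s)))\<^sup>2"
    using tau_sol_square assms(1-3) unfolding \<tau>_def by simp
  ultimately show "\<exists>\<tau>'. (\<tau> has_real_derivative \<tau>') (at s) \<and>
              (\<exists>\<sigma>\<in>{-1, 1::real}.
                 \<rho>^4 * \<tau>'\<^sup>2 / (9 - 4 * \<rho>\<^sup>2 * (\<tau> s)\<^sup>2)
                 = \<rho>\<^sup>2 * \<kappa>\<^sub>0\<^sup>2 - 1/2 + \<rho>\<^sup>2 * (\<tau> s)\<^sup>2 / 9
                   - \<sigma> * (1/6) * sqrt (9 - 4 * \<rho>\<^sup>2 * (\<tau> s)\<^sup>2))"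
    using torsion_equation_of_profile[OF \<open>\<rho> > 0\<close> _ D _ disc_nz]
    unfolding \<kappa>\<^sub>0_def by blast
qed

end
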